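(* Let $w\in S_\infty$ with $\operatorname{len} w=m$. Then (i) $\varphi(\delta_w)\in\operatorname{span}\{\delta_u : u\in L_m(BC*S_\infty)\}$; and (ii) for each $y\in L_m(S_\infty)$ we have $\langle \varphi(\delta_y),\delta_w'\rangle\neq 0$ if and only if $y=w$.
   Context: $BC$ is the bicyclic monoid $\langle p,q : pq=e\rangle$ with involution $p^*=q$. $S_\infty$ is the free monoid on $\{t_n,t_n^*: n\in\mathbb{N}\}$ with involution $t_n\mapsto t_n^*$. $BC*S_\infty$ is the free product of monoids, with the involution $(s_1t_1\cdots s_nt_n)^*=t_n^*s_n^*\cdots t_1^*s_1^*$; $S_\infty$ is regarded as a submonoid of it. For a monoid $S$ with involution, $\mathbb{C}S$ is the semigroup algebra with basis $\{\delta_s:s\in S\}$, $\delta_s\delta_t=\delta_{st}$, $\delta_s^*=\delta_{s^*}$; for $s\in S$, $\delta_s'$ is the linear functional on $\mathbb{C}S$ with $\langle\delta_t,\delta_s'\rangle=1$ if $t=s$ and $0$ otherwise. Length: every $u\in BC*S_\infty\setminus\{e\}$ has a unique expression $u=w_1\cdots w_n$ with $n\in\mathbb{N}$, $w_i\in (BC\setminus\{e\})\cup\{t_j,t_j^*: j\in\mathbb{N}\}$, and $w_{i+1}\in\{t_j,t_j^*:j\in\mathbb{N}\}$ whenever $w_i\in BC\setminus\{e\}$; set $\operatorname{len}u=n$ and $\operatorname{len}e=0$. For $m\in\mathbb{N}_0$, $L_m(BC*S_\infty)=\{u\in BC*S_\infty:\operatorname{len}u\le m\}$ and $L_m(S_\infty)=\{u\in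 S_\infty:\operatorname{len}u\le m\}$. Fix a C*-norm $\|\cdot\|$ on $\mathbb{C}(BC*S_\infty)$ (i.e. a norm whose completion is a C*-algebra containing $\mathbb{C}(BC*S_\infty)$ as a $*$-subalgebra). Let $\gamma_n=(n\|\delta_{t_n}\|)^{-1}$ and $a_n=\delta_p+\gamma_n\delta_{t_n}$ for $n\in\mathbb{N}$, and let $\varphi:\mathbb{C}S_\infty\to\mathbb{C}(BC*S_\infty)$ be the unique unital $*$-homomorphism with $\varphi(\delta_{t_n})=a_n$ for all $n\in\mathbb{N}$. *)

theory Defs
  imports Complex_Main
begin

text \<open>B a b stands for the non-identity element
 q^a p^b of the bicyclic monoid (every element of BC has the unique normal
 form q^a p^b, and p = B 0 1, q = B 1 0).  T n False stands for t_n and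
 T n True for t_n^*.  The natural numbers indexing generators start at 1.\<close>

datatype lt = B nat nat | T nat bool

fun isB :: "lt \<Rightarrow> bool" where
  "isB (B a b) = True"
| "isB (T n s) = False"

fun reduced :: "lt list \<Rightarrow> bool" where
  "reduced [] = True"
| "reduced [x] = (x \<noteq> B 0 0)"
| "reduced (x # y # r) = (x \<noteq> B 0 0 \<and> \<not> (isB x \<and> isB y) \<and> reduced (y # r))"

definition bcs_word :: "lt list \<Rightarrow> bool" where
  "bcs_word u \<longleftrightarrow> reduced u \<and> (\<forall>n s. T n s \<in> set u \<longrightarrow> n \<ge> 1)"

definition sinf_word :: "lt list \<Rightarrow> bool" where
  "sinf_word u \<longleftrightarrow> (\<forall>x \<in> set u. \<exists>n s. n \<ge> 1 \<and> x = T n s)"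

text \<open>Multiplication in BC: (q^a p^b)(q^c p^d) = q^(a+(c-b)) p^(d+(b-c)).\<close>
fun junction :: "lt \<Rightarrow> lt \<Rightarrow> lt list" where
  "junction (B a b) (B c d) =
     (let a' = a + (c - b); d' = d + (b - c) in
      if a' = 0 \<and> d' = 0 then [] else [B a' d'])"
| "junction x y = [x, y]"

definition wmul :: "lt list \<Rightarrow> lt list \<Rightarrow> lt list" where
  "wmul u v = (if u = [] then v else if v = [] then u
               else butlast u @ junction (last u) (hd v) @ tl v)"

fun lstar :: "lt \<Rightarrow> lt" where
  "lstar (B a b) = B b a"
| "lstar (T n s) = T n (\<not> s)"

definition wstar :: "lt list \<Rightarrow> lt list" where
  "wstar u = rev (map lstar u)"

definition len :: "lt list \<Rightarrow> nat" where
  "len u = length u"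

definition Lm_bcs :: "nat \<Rightarrow> lt list set" where
  "Lm_bcs m = {u. bcs_word u \<and> len u \<le> m}"

definition Lm_sinf :: "nat \<Rightarrow> lt list set" where
  "Lm_sinf m = {u. sinf_word u \<and> len u \<le> m}"

definition supp :: "('w \<Rightarrow> complex) \<Rightarrow> 'w set" where
  "supp f = {u. f u \<noteq> 0}"

text \<open>Elements of the semigroup algebra CS, S given by a carrier predicate W.\<close>
definition in_alg :: "('w \<Rightarrow> bool) \<Rightarrow> ('w \<Rightarrow> complex) \<Rightarrow> bool" where
  "in_alg W f \<longleftrightarrow> finite (supp f) \<and> (\<forall>u \<in> supp f. W u)"

definition dlt :: "'w \<Rightarrow> 'w \<Rightarrow> complex" where
  "dlt s = (\<lambda>u. if u = s then 1 else 0)"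

definition azero :: "'w \<Rightarrow> complex" where
  "azero = (\<lambda>u. 0)"

definition aadd :: "('w \<Rightarrow> complex) \<Rightarrow> ('w \<Rightarrow> complex) \<Rightarrow> 'w \<Rightarrow> complex" where
  "aadd f g = (\<lambda>u. f u + g u)"

definition asmul :: "complex \<Rightarrow> ('w \<Rightarrow> complex) \<Rightarrow> 'w \<Rightarrow> complex" where
  "asmul c f = (\<lambda>u. c * f u)"

definition conv :: "('w \<Rightarrow> 'w \<Rightarrow> 'w) \<Rightarrow> ('w \<Rightarrow> complex) \<Rightarrow> ('w \<Rightarrow> complex) \<Rightarrow> 'w \<Rightarrow> complex" where
  "conv mul f g = (\<lambda>u. \<Sum>(x, y) \<in> {(x, y). f x \<noteq> 0 \<and> g y \<noteq> 0 \<and> mul x y = u}. f x * g y)"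

definition astar :: "('w \<Rightarrow> 'w) \<Rightarrow> ('w \<Rightarrow> complex) \<Rightarrow> 'w \<Rightarrow> complex" where
  "astar iv f = (\<lambda>u. cnj (f (iv u)))"

definition lin_span :: "'w set \<Rightarrow> ('w \<Rightarrow> complex) \<Rightarrow> bool" where
  "lin_span S f \<longleftrightarrow> (\<exists>F c. finite F \<and> F \<subseteq> S \<and> f = (\<lambda>x. \<Sum>u\<in>F. c u * dlt u x))"

text \<open>The pairing with delta_s' : the coefficient of delta_s.\<close>
definition dual_pair :: "('w \<Rightarrow> complex) \<Rightarrow> 'w \<Rightarrow> complex" where
  "dual_pair f s = f s"

text \<open>A C*-norm on C(BC * S_infinity): a norm which is submultiplicative and
 satisfies the C*-identity; equivalently its completion is a C*-algebra containing
 C(BC * S_infinity) as a *-subalgebra.\<close>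
definition cstar_norm :: "((lt list \<Rightarrow> complex) \<Rightarrow> real) \<Rightarrow> bool" where
  "cstar_norm N \<longleftrightarrow>
     (\<forall>f. in_alg bcs_word f \<longrightarrow> N f \<ge> 0 \<and> (N f = 0 \<longleftrightarrow> f = azero)) \<and>
     (\<forall>f g. in_alg bcs_word f \<longrightarrow> in_alg bcs_word g \<longrightarrow> N (aadd f g) \<le> N f + N g) \<and>
     (\<forall>c f. in_alg bcs_word f \<longrightarrow> N (asmul c f) = cmod c * N f) \<and>
     (\<forall>f g. in_alg bcs_word f \<longrightarrow> in_alg bcs_word g \<longrightarrow> N (conv wmul f g) \<le> N f * N g) \<and>
     (\<forall>f. in_alg bcs_word f \<longrightarrow> N (conv wmul (astar wstar f) f) = (N f)\<^sup>2)"

text \<open>Unital *-homomorphisms C S_infinity \<rightarrow> C(BC * S_infinity);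
 multiplication in S_infinity is concatenation, involution wstar.\<close>
definition unital_star_hom :: "((lt list \<Rightarrow> complex) \<Rightarrow> (lt list \<Rightarrow> complex)) \<Rightarrow> bool" where
  "unital_star_hom \<phi> \<longleftrightarrow>
     (\<forall>f. in_alg sinf_word f \<longrightarrow> in_alg bcs_word (\<phi> f)) \<and>
     (\<forall>f g. in_alg sinf_word f \<longrightarrow> in_alg sinf_word g \<longrightarrow> \<phi> (aadd f g) = aadd (\<phi> f) (\<phi> g)) \<and>
     (\<forall>c f. in_alg sinf_word f \<longrightarrow> \<phi> (asmul c f) = asmul c (\<phi> f)) \<and>
     (\<forall>f g. in_alg sinf_word f \<longrightarrow> in_alg sinf_word g \<longrightarrow>
        \<phi> (conv (@) f g) = conv wmul (\<phi> f) (\<phi> g)) \<and>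
     (\<forall>f. in_alg sinf_word f \<longrightarrow> \<phi> (astar wstar f) = astar wstar (\<phi> f)) \<and>
     \<phi> (dlt []) = dlt []"

definition gamma :: "((lt list \<Rightarrow> complex) \<Rightarrow> real) \<Rightarrow> nat \<Rightarrow> real" where
  "gamma N n = inverse (real n * N (dlt [T n False]))"

definition a_elt :: "((lt list \<Rightarrow> complex) \<Rightarrow> real) \<Rightarrow> nat \<Rightarrow> lt list \<Rightarrow> complex" where
  "a_elt N n = aadd (dlt [B 0 1]) (asmul (complex_of_real (gamma N n)) (dlt [T n False]))"

end

theory Submission
  imports Defs
begin

text \<open>Each generator t_n (resp. t_n^*) is sent to a one-letter element: a letter of BC plus
 gamma_n t_n (resp. gamma_n t_n^*).  Multiplying a word on the left by one letter adds at most one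
 letter, and a BC letter adds no generator letter.  Hence every word in the support of
 phi(delta_w) has length at most len w and at most len w generator letters, and the only one
 with exactly len w generator letters is w itself, with coefficient the product of the gamma_n,
 which is nonzero because the norm is.\<close>

definition gen_count :: "lt list \<Rightarrow> nat" where
  "gen_count u = length (filter (\<lambda>x. \<not> isB x) u)"

lemma gen_count_le_length: "gen_count u \<le> length u"
  unfolding gen_count_def by simp

lemma gen_count_sinf_word: "sinf_word u \<Longrightarrow> gen_count u = length u"
proof -
  assume "sinf_word u"
  then have "filter (\<lambda>x. \<not> isB x) u = u"
    unfolding sinf_word_def by (force simp: filter_id_conv)
  then show ?thesis by (simp add: gen_count_def)
qed

lemma wstar_wstar [simp]: "wstar (wstar u) = u"
proof -
  have "lstar (lstar x) = x" for x by (cases x) auto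
  then show ?thesis unfolding wstar_def by (simp add: rev_map comp_def)
qed

lemma wstar_eq_iff: "wstar u = v \<longleftrightarrow> u = wstar v"
  by auto

lemma wstar_singleton: "wstar [x] = [lstar x]"
  by (simp add: wstar_def)

lemma cnj_dlt: "cnj (dlt s u) = dlt s u"
  by (simp add: dlt_def)

lemma dlt_wstar: "dlt s (wstar u) = dlt (wstar s) u"
  by (auto simp: dlt_def wstar_eq_iff)

lemma astar_dlt: "astar wstar (dlt s) = dlt (wstar s)"
  unfolding astar_def by (auto simp: dlt_def intro!: ext)

lemma wmul_generator: "\<not> isB x \<Longrightarrow> wmul [x] r = x # r"
  by (cases x; cases r) (auto simp: wmul_def)

lemma length_wmul_letter: "length (wmul [x] v) \<le> Suc (length v)"
  by (cases v; cases x; cases "hd v") (auto simp: wmul_def Let_def)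

lemma gen_count_wmul_letter: "gen_count (wmul [x] v) = gen_count [x] + gen_count v"
  by (cases v; cases x; cases "hd v") (auto simp: wmul_def gen_count_def Let_def)

lemma conv_nonzeroE:
  assumes "conv mul f g u \<noteq> 0"
  obtains a v where "f a \<noteq> 0" "g v \<noteq> 0" "mul a v = u"
  using assms unfolding conv_def
  by (cases "{(x, y). f x \<noteq> 0 \<and> g y \<noteq> 0 \<and> mul x y = u} = {}") auto

lemma conv_unique_pair:
  assumes "{(x, y). f x \<noteq> 0 \<and> g y \<noteq> 0 \<and> mul x y = u} = {(a, v)}"
  shows "conv mul f g u = f a * g v"
  unfolding conv_def using assms by simp

lemma dlt_Cons: "dlt (x # r) = conv (@) (dlt [x]) (dlt r)"
proof
  fix u
  have "{(a, v). dlt [x] a \<noteq> 0 \<and> dlt r v \<noteq> 0 \<and> a @ v = u} = (if u = x # r then {([x], r)} else {})"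
    by (auto simp: dlt_def)
  then show "dlt (x # r) u = conv (@) (dlt [x]) (dlt r) u"
    by (auto simp: conv_def dlt_def)
qed

lemma lin_span_supp:
  assumes "finite (supp f)" "supp f \<subseteq> S"
  shows "lin_span S f"
proof -
  have "f x = (\<Sum>u\<in>supp f. f u * dlt u x)" for x
  proof -
    have "(\<Sum>u\<in>supp f. f u * dlt u x) = (\<Sum>u\<in>supp f. if u = x then f u else 0)"
      by (rule sum.cong) (auto simp: dlt_def)
    also have "\<dots> = f x"
      using assms(1) by (simp add: sum.delta' supp_def)
    finally show ?thesis by simp
  qed
  then show ?thesis
    using assms unfolding lin_span_def by blast
qed

lemma in_alg_dlt: "W s \<Longrightarrow> in_alg W (dlt s)"
  by (auto simp: in_alg_def supp_def dlt_def)

lemma gamma_pos: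
  assumes "cstar_norm N" "n \<ge> 1"
  shows "gamma N n > 0"
proof -
  have "in_alg bcs_word (dlt [T n False])"
    by (rule in_alg_dlt) (use assms(2) in \<open>auto simp: bcs_word_def\<close>)
  moreover have "dlt [T n False] \<noteq> azero"
    by (auto simp: azero_def dlt_def fun_eq_iff)
  ultimately have "N (dlt [T n False]) \<ge> 0" "N (dlt [T n False]) \<noteq> 0"
    using assms(1) unfolding cstar_norm_def by blast+
  then show ?thesis using assms(2) by (simp add: gamma_def)
qed

lemma phi_generator:
  assumes hom: "unital_star_hom \<phi>"
    and gen: "\<forall>n \<ge> 1. \<phi> (dlt [T n False]) = a_elt N n"
    and "n \<ge> 1"
  shows "\<phi> (dlt [T n s]) =
    aadd (dlt [if s then B 1 0 else B 0 1]) (asmul (complex_of_real (gamma N n)) (dlt [T n s]))"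
proof (cases s)
  case False
  then show ?thesis using gen \<open>n \<ge> 1\<close> by (simp add: a_elt_def)
next
  case True
  have "in_alg sinf_word (dlt [T n False])"
    by (rule in_alg_dlt) (use \<open>n \<ge> 1\<close> in \<open>auto simp: sinf_word_def\<close>)
  then have "\<phi> (astar wstar (dlt [T n False])) = astar wstar (a_elt N n)"
    using hom gen \<open>n \<ge> 1\<close> unfolding unital_star_hom_def by simp
  moreover have "astar wstar (dlt [T n False]) = dlt [T n True]"
    by (simp add: astar_dlt wstar_def)
  ultimately show ?thesis using True
    by (simp add: a_elt_def astar_def aadd_def asmul_def dlt_wstar wstar_singleton cnj_dlt)
qed

definition leading_word :: "lt list \<Rightarrow> (lt list \<Rightarrow> complex) \<Rightarrow> bool" where
  "leading_word y f \<longleftrightarrow>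
     f y \<noteq> 0 \<and> (\<forall>u \<in> supp f. length u \<le> length y \<and> (gen_count u = length y \<longrightarrow> u = y))"

lemma lin_span_Lm_bcs_leading_word:
  assumes "in_alg bcs_word f" "leading_word y f"
  shows "lin_span (Lm_bcs (length y)) f"
proof (rule lin_span_supp)
  show "finite (supp f)"
    using assms(1) by (simp add: in_alg_def)
  show "supp f \<subseteq> Lm_bcs (length y)"
    using assms unfolding in_alg_def leading_word_def Lm_bcs_def len_def by blast
qed

lemma leading_word_dlt_Nil: "leading_word [] (dlt [])"
  by (auto simp: leading_word_def supp_def dlt_def)

lemma leading_word_conv_letter:
  assumes x: "\<not> isB x" and fx: "f [x] \<noteq> 0"
    and supp_f: "\<forall>a \<in> supp f. a = [x] \<or> (\<exists>b c. a = [B b c])"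
    and g: "leading_word r g" and r: "gen_count r = length r"
  shows "leading_word (x # r) (conv wmul f g)"
proof -
  have product:
    "length (wmul a v) \<le> length (x # r) \<and>
     (gen_count (wmul a v) = length (x # r) \<longrightarrow> a = [x] \<and> v = r)"
    if "f a \<noteq> 0" "g v \<noteq> 0" for a v
  proof -
    have v: "length v \<le> length r" "gen_count v = length r \<longrightarrow> v = r"
      using g that(2) by (auto simp: leading_word_def supp_def)
    have "a = [x] \<or> (\<exists>b c. a = [B b c])"
      using supp_f that(1) by (simp add: supp_def)
    then obtain l where a: "a = [l]" and l: "l = x \<or> isB l"
      by auto
    have v_count: "gen_count v \<le> length r"
      using v(1) gen_count_le_length order_trans by blast
    have "length (wmul a v) \<le> length (x # r)"
      using a v(1) length_wmul_letter[of l v] by simp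
    moreover have "a = [x] \<and> v = r" if "gen_count (wmul a v) = length (x # r)"
    proof -
      have "gen_count [l] + gen_count v = Suc (length r)"
        using that a gen_count_wmul_letter[of l v] by simp
      moreover have "gen_count [l] = (if isB l then 0 else 1)"
        by (simp add: gen_count_def)
      ultimately show ?thesis
        using a l v(2) v_count by (auto split: if_splits)
    qed
    ultimately show ?thesis by blast
  qed
  have "{(a, v). f a \<noteq> 0 \<and> g v \<noteq> 0 \<and> wmul a v = x # r} = {([x], r)}"
  proof
    have "gen_count (x # r) = length (x # r)"
      using x r by (simp add: gen_count_def)
    then show "{(a, v). f a \<noteq> 0 \<and> g v \<noteq> 0 \<and> wmul a v = x # r} \<subseteq> {([x], r)}"
      using product by auto
    show "{([x], r)} \<subseteq> {(a, v). f a \<noteq> 0 \<and> g v \<noteq> 0 \<and> wmul a v = x # r}"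
      using fx g x by (simp add: leading_word_def wmul_generator)
  qed
  then have "conv wmul f g (x # r) = f [x] * g r"
    by (rule conv_unique_pair)
  then have "conv wmul f g (x # r) \<noteq> 0"
    using fx g by (simp add: leading_word_def)
  moreover have "length u \<le> length (x # r) \<and> (gen_count u = length (x # r) \<longrightarrow> u = x # r)"
    if nz: "conv wmul f g u \<noteq> 0" for u
  proof -
    obtain a v where "f a \<noteq> 0" "g v \<noteq> 0" "wmul a v = u"
      using conv_nonzeroE[OF nz] by blast
    then show ?thesis
      using product[of a v] x by (auto simp: wmul_generator)
  qed
  ultimately show ?thesis
    by (simp add: leading_word_def supp_def)
qed

lemma leading_word_phi:
  assumes cs: "cstar_norm N" and hom: "unital_star_hom \<phi>"
    and gen: "\<forall>n \<ge> 1. \<phi> (dlt [T n False]) = a_elt N n"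
  shows "sinf_word y \<Longrightarrow> leading_word y (\<phi> (dlt y))"
proof (induction y)
  case Nil
  then show ?case
    using hom leading_word_dlt_Nil by (simp add: unital_star_hom_def)
next
  case (Cons x r)
  then obtain n s where n: "n \<ge> 1" and x: "x = T n s"
    by (auto simp: sinf_word_def)
  have r: "sinf_word r"
    using Cons.prems by (simp add: sinf_word_def)
  have "in_alg sinf_word (dlt [x])" "in_alg sinf_word (dlt r)"
    using Cons.prems r by (auto intro!: in_alg_dlt simp: sinf_word_def)
  then have "\<phi> (dlt (x # r)) = conv wmul (\<phi> (dlt [x])) (\<phi> (dlt r))"
    using hom dlt_Cons[of x r] unfolding unital_star_hom_def by metis
  moreover have "\<phi> (dlt [x]) [x] \<noteq> 0"
    using phi_generator[OF hom gen n] gamma_pos[OF cs n] x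
    by (simp add: aadd_def asmul_def dlt_def)
  moreover have "\<forall>a \<in> supp (\<phi> (dlt [x])). a = [x] \<or> (\<exists>b c. a = [B b c])"
    using phi_generator[OF hom gen n] x
    by (auto simp: supp_def aadd_def asmul_def dlt_def split: if_splits)
  ultimately show ?case
    using leading_word_conv_letter Cons.IH[OF r] gen_count_sinf_word[OF r] x by simp
qed

theorem lemma3p2:
  fixes N :: "(lt list \<Rightarrow> complex) \<Rightarrow> real"
    and \<phi> :: "(lt list \<Rightarrow> complex) \<Rightarrow> (lt list \<Rightarrow> complex)"
    and w :: "lt list" and m :: nat
  assumes "cstar_norm N"
    and "unital_star_hom \<phi>"
    and "\<forall>n \<ge> 1. \<phi> (dlt [T n False]) = a_elt N n"
    and "sinf_word w" and "len w = m"
  shows "lin_span (Lm_bcs m) (\<phi> (dlt w)) \<and>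
         (\<forall>y \<in> Lm_sinf m. dual_pair (\<phi> (dlt y)) w \<noteq> 0 \<longleftrightarrow> y = w)"
proof
  note leading = leading_word_phi[OF assms(1-3)]
  have "in_alg bcs_word (\<phi> (dlt w))"
    using assms(2) in_alg_dlt[of sinf_word, OF assms(4)] unfolding unital_star_hom_def by blast
  then have "lin_span (Lm_bcs (length w)) (\<phi> (dlt w))"
    using leading[OF assms(4)] by (rule lin_span_Lm_bcs_leading_word)
  then show "lin_span (Lm_bcs m) (\<phi> (dlt w))"
    using assms(5) by (simp add: len_def)
  have "y = w" if "y \<in> Lm_sinf m" "\<phi> (dlt y) w \<noteq> 0" for y
  proof -
    have "sinf_word y" "length y \<le> m"
      using that(1) by (auto simp: Lm_sinf_def len_def)
    moreover have "w \<in> supp (\<phi> (dlt y))"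
      using that(2) by (simp add: supp_def)
    ultimately have "length w \<le> length y" "gen_count w = length y \<longrightarrow> w = y"
      using leading unfolding leading_word_def by blast+
    then show ?thesis
      using \<open>length y \<le> m\<close> gen_count_sinf_word[OF assms(4)] assms(5) by (simp add: len_def)
  qed
  moreover have "\<phi> (dlt w) w \<noteq> 0"
    using leading[OF assms(4)] by (simp add: leading_word_def)
  ultimately show "\<forall>y \<in> Lm_sinf m. dual_pair (\<phi> (dlt y)) w \<noteq> 0 \<longleftrightarrow> y = w"
    by (auto simp: dual_pair_def)
qed

end
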